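(* Let $\varphi$ be the endomorphism of the free group $F_2$ on $\{a,b\}$ defined by $a\varphi=a^2$ and $b\varphi=a^2b^2a^{-2}$. Then $\varphi$ is an almost strictly length-increasing monomorphism of $F_2$ which is not length-increasing.
   Context: Elements of a free group are identified with reduced words and $|u|$ is the length of the reduced word $u$; maps are written on the right. An endomorphism $\varphi$ of $F_n$ is length-increasing if $|u\varphi|\geq|u|$ for all $u\in F_n$, and almost strictly length-increasing if $|u\varphi|\leq|u|$ for only finitely many $u\in F_n$. *)

theory Defs
  imports Main
begin

text \<open>Free group on a generating type 'g: elements are reduced words over letters
  (b, g), where b = False means the generator g and b = True means its inverse.\<close>

type_synonym 'g letter = "bool \<times> 'g"
type_synonym 'g word = "'g letter list"

definition inv_letter :: "'g letter \<Rightarrow> 'g letter" where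
  "inv_letter x = (\<not> fst x, snd x)"

fun reduced :: "'g word \<Rightarrow> bool" where
  "reduced [] = True"
| "reduced [x] = True"
| "reduced (x # y # ys) = (y \<noteq> inv_letter x \<and> reduced (y # ys))"

fun push :: "'g letter \<Rightarrow> 'g word \<Rightarrow> 'g word" where
  "push x [] = [x]"
| "push x (y # ys) = (if y = inv_letter x then ys else x # y # ys)"

definition reduce :: "'g word \<Rightarrow> 'g word" where
  "reduce w = foldr push w []"

definition inv_word :: "'g word \<Rightarrow> 'g word" where
  "inv_word w = rev (map inv_letter w)"

definition endo :: "('g \<Rightarrow> 'g word) \<Rightarrow> 'g word \<Rightarrow> 'g word" where
  "endo f u = reduce (concat (map (\<lambda>x. if fst x then inv_word (f (snd x)) else f (snd x)) u))"

definition monomorphism :: "('g \<Rightarrow> 'g word) \<Rightarrow> bool" where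
  "monomorphism f \<longleftrightarrow> inj_on (endo f) {u. reduced u}"

definition length_increasing :: "('g \<Rightarrow> 'g word) \<Rightarrow> bool" where
  "length_increasing f \<longleftrightarrow> (\<forall>u. reduced u \<longrightarrow> length u \<le> length (endo f u))"

definition almost_strictly_length_increasing :: "('g \<Rightarrow> 'g word) \<Rightarrow> bool" where
  "almost_strictly_length_increasing f \<longleftrightarrow>
     finite {u. reduced u \<and> length (endo f u) \<le> length u}"

datatype gen2 = a | b

fun phi_gen :: "gen2 \<Rightarrow> gen2 word" where
  "phi_gen a = [(False, a), (False, a)]"
| "phi_gen b = [(False, a), (False, a), (False, b), (False, b), (True, a), (True, a)]"

end

theory Submission
  imports Defs
begin

text \<open>On the generators, \<open>\<phi>\<close> is the map \<open>x \<mapsto> x\<^sup>2\<close> followed by conjugation with \<open>a\<^sup>2\<close>: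
  \<open>a\<phi> = a\<^sup>2 a\<^sup>2 a\<^sup>-\<^sup>2\<close> and \<open>b\<phi> = a\<^sup>2 b\<^sup>2 a\<^sup>-\<^sup>2\<close>. Hence \<open>u\<phi> = a\<^sup>2 (double u) a\<^sup>-\<^sup>2\<close>, where \<open>double\<close>
  repeats every letter of \<open>u\<close> twice. For reduced \<open>u\<close> the word \<open>double u\<close> is again reduced, so it is
  recovered from \<open>u\<phi>\<close> as the reduced form of \<open>a\<^sup>-\<^sup>2 (u\<phi>) a\<^sup>2\<close>. This gives injectivity and
  \<open>2|u| \<le> |u\<phi>| + 4\<close>, so only words of length at most 4 can fail to grow strictly. On the other
  hand \<open>(a\<^sup>-\<^sup>1 b a)\<phi> = b\<^sup>2\<close> is shorter than \<open>a\<^sup>-\<^sup>1 b a\<close>.\<close>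

lemma inv_letter_inv_letter [simp]: "inv_letter (inv_letter x) = x"
  by (simp add: inv_letter_def)

lemma inv_letter_neq [simp]: "inv_letter x \<noteq> x" "x \<noteq> inv_letter x"
  by (cases x, simp add: inv_letter_def)+

lemma reduced_push: "reduced t \<Longrightarrow> reduced (push x t)"
  by (induction x t rule: push.induct) (auto elim: reduced.elims)

lemma reduced_foldr_push: "reduced t \<Longrightarrow> reduced (foldr push w t)"
  by (induction w) (auto intro: reduced_push)

lemma reduced_reduce: "reduced (reduce w)"
  unfolding reduce_def by (rule reduced_foldr_push) simp

lemma push_inv_letter_push: "reduced t \<Longrightarrow> push (inv_letter x) (push x t) = t"
  by (cases t rule: reduced.cases) auto

lemma foldr_push_push: "reduced s \<Longrightarrow> foldr push (push x r) s = push x (foldr push r s)"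
proof (cases r)
  case (Cons y r')
  assume "reduced s"
  then have "push x (push y (foldr push r' s)) = foldr push r' s" if "y = inv_letter x"
    using that push_inv_letter_push[of _ y] reduced_foldr_push by fastforce
  then show ?thesis
    using Cons by auto
qed simp

lemma foldr_push_reduce: "reduced s \<Longrightarrow> foldr push (reduce w) s = foldr push w s"
  by (induction w) (simp_all add: reduce_def foldr_push_push)

lemma reduce_reduced_id: "reduced w \<Longrightarrow> reduce w = w"
  by (induction w rule: reduced.induct) (simp_all add: reduce_def)

lemma reduce_reduce [simp]: "reduce (reduce w) = reduce w"
  by (rule reduce_reduced_id[OF reduced_reduce])

lemma reduce_append: "reduce (u @ v) = foldr push u (reduce v)"
  by (simp add: reduce_def)

lemma reduce_append_reduce_left: "reduce (reduce u @ v) = reduce (u @ v)"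
  by (simp add: reduce_append foldr_push_reduce reduced_reduce)

lemma reduce_append_reduce_right: "reduce (u @ reduce v) = reduce (u @ v)"
  by (simp add: reduce_append)

lemma foldr_push_inv_word: "reduced s \<Longrightarrow> foldr push (inv_word w) (foldr push w s) = s"
  by (induction w) (simp_all add: inv_word_def push_inv_letter_push reduced_foldr_push)

lemma reduce_inv_word_append_cancel: "reduce (inv_word w @ w @ v) = reduce v"
  by (simp add: reduce_append foldr_push_inv_word reduced_reduce)

lemma length_foldr_push: "length (foldr push w t) \<le> length w + length t"
proof (induction w)
  case (Cons x w)
  have "length (push x s) \<le> Suc (length s)" for s :: "'a word"
    by (cases "(x, s)" rule: push.cases) auto
  then show ?case
    using Cons.IH le_trans by fastforce
qed simp

lemma length_reduce_le: "length (reduce w) \<le> length w"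
  using length_foldr_push[of w "[]"] by (simp add: reduce_def)

lemma endo_append_intertwine:
  assumes letter: "\<And>x. reduce ((if fst x then inv_word (f (snd x)) else f (snd x)) @ c)
                        = reduce (c @ k x)"
  shows "reduce (endo f u @ c) = reduce (c @ concat (map k u))"
proof -
  let ?img = "\<lambda>x. if fst x then inv_word (f (snd x)) else f (snd x)"
  have "reduce (concat (map ?img u) @ c) = reduce (c @ concat (map k u))"
  proof (induction u)
    case (Cons x u)
    have "reduce (?img x @ concat (map ?img u) @ c)
          = reduce (?img x @ reduce (concat (map ?img u) @ c))"
      by (simp add: reduce_append_reduce_right)
    also have "\<dots> = reduce (reduce (?img x @ c) @ concat (map k u))"
      by (simp add: Cons.IH reduce_append_reduce_right reduce_append_reduce_left)
    also have "\<dots> = reduce (c @ k x @ concat (map k u))"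
      by (simp add: letter reduce_append_reduce_left)
    finally show ?case
      by simp
  qed simp
  then show ?thesis
    by (simp add: endo_def reduce_append_reduce_left)
qed

definition double :: "'g word \<Rightarrow> 'g word" where
  "double u = concat (map (\<lambda>x. [x, x]) u)"

lemma double_simps [simp]: "double [] = []" "double (x # u) = x # x # double u"
  by (simp_all add: double_def)

lemma length_double: "length (double u) = 2 * length u"
  by (induction u) simp_all

lemma inj_double: "inj double"
proof (rule injI)
  show "double u = double v \<Longrightarrow> u = v" for u v :: "'g word"
  proof (induction u arbitrary: v)
    case Nil
    then show ?case
      by (cases v) simp_all
  next
    case (Cons x u)
    then show ?case
      by (cases v) auto
  qed
qed

lemma reduced_double: "reduced u \<Longrightarrow> reduced (double u)"
  by (induction u rule: reduced.induct) simp_all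

instance gen2 :: finite
proof
  have "(UNIV :: gen2 set) = {a, b}"
    using gen2.exhaust by blast
  then show "finite (UNIV :: gen2 set)"
    by (metis finite.emptyI finite.insertI)
qed

abbreviation a_squared :: "gen2 word" where
  "a_squared \<equiv> [(False, a), (False, a)]"

lemma phi_gen_append_a_squared: "reduce (endo phi_gen u @ a_squared) = reduce (a_squared @ double u)"
  unfolding double_def
proof (rule endo_append_intertwine)
  fix x :: "gen2 letter"
  obtain s g where "x = (s, g)"
    by fastforce
  then show "reduce ((if fst x then inv_word (phi_gen (snd x)) else phi_gen (snd x)) @ a_squared)
        = reduce (a_squared @ [x, x])"
    by (cases s; cases g) (simp_all add: reduce_def inv_word_def inv_letter_def)
qed

lemma double_eq_conjugate_phi_gen:
  assumes "reduced u"
  shows "double u = reduce (inv_word a_squared @ endo phi_gen u @ a_squared)"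
proof -
  have "reduce (inv_word a_squared @ endo phi_gen u @ a_squared)
        = reduce (inv_word a_squared @ reduce (a_squared @ double u))"
    by (metis phi_gen_append_a_squared reduce_append_reduce_right)
  also have "\<dots> = double u"
    by (simp only: reduce_append_reduce_right reduce_inv_word_append_cancel
        reduce_reduced_id[OF reduced_double[OF assms]])
  finally show ?thesis ..
qed

lemma length_phi_gen_ge:
  assumes "reduced u"
  shows "2 * length u \<le> length (endo phi_gen u) + 4"
proof -
  have "2 * length u = length (reduce (inv_word a_squared @ endo phi_gen u @ a_squared))"
    by (metis assms double_eq_conjugate_phi_gen length_double)
  also have "\<dots> \<le> length (inv_word a_squared @ endo phi_gen u @ a_squared)"
    by (rule length_reduce_le)
  finally show ?thesis
    by (simp add: inv_word_def)
qed

lemma monomorphism_phi_gen: "monomorphism phi_gen"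
  unfolding monomorphism_def
  by (rule inj_onI) (metis double_eq_conjugate_phi_gen inj_double injD mem_Collect_eq)

lemma almost_strictly_length_increasingI:
  fixes f :: "'g::finite \<Rightarrow> 'g word"
  assumes "\<And>u. reduced u \<Longrightarrow> n < length u \<Longrightarrow> length u < length (endo f u)"
  shows "almost_strictly_length_increasing f"
  unfolding almost_strictly_length_increasing_def
proof (rule finite_subset)
  show "{u. reduced u \<and> length (endo f u) \<le> length u} \<subseteq> {u. set u \<subseteq> UNIV \<and> length u \<le> n}"
    using assms by (auto simp: not_less[symmetric])
  show "finite {u :: 'g word. set u \<subseteq> UNIV \<and> length u \<le> n}"
    by (rule finite_lists_length_le) simp
qed

lemma almost_strictly_length_increasing_phi_gen: "almost_strictly_length_increasing phi_gen"
  by (rule almost_strictly_length_increasingI[where n = 4]) (drule length_phi_gen_ge; simp)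

lemma not_length_increasing_phi_gen: "\<not> length_increasing phi_gen"
proof -
  let ?u = "[(True, a), (False, b), (False, a)]"
  have "reduced ?u" and "length (endo phi_gen ?u) < length ?u"
    by (simp_all add: endo_def reduce_def inv_word_def inv_letter_def)
  then show ?thesis
    unfolding length_increasing_def using not_le by blast
qed

theorem mainTheorem7:
  shows "monomorphism phi_gen \<and> almost_strictly_length_increasing phi_gen
         \<and> \<not> length_increasing phi_gen"
  using monomorphism_phi_gen almost_strictly_length_increasing_phi_gen
    not_length_increasing_phi_gen by blast

end
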